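(* Let $G$ and $H$ be topological groupoids and let $\pi\colon G\to H$ be a fiberwise groupoid covering map. Then for every $u\in G^0$, the restriction $\pi|_{G^u}\colon G^u\to H^{\pi(u)}$ (respectively $\pi|_{G_u}\colon G_u\to H_{\pi(u)}$) is a regular covering map implemented by the action of the group $\pi^{-1}(\pi(u))$ on $G^u$ by left multiplication (respectively on $G_u$ by right multiplication).
   Context: A topological groupoid is a small category with all morphisms invertible and a topology making multiplication and inversion continuous; $G^0$ is the unit space, $d,r$ domain and range, $G^u=r^{-1}(u)$, $G_u=d^{-1}(u)$. A fiberwise groupoid covering $\pi\colon G\to H$ is a surjective groupoid homomorphism that restricts to a homeomorphism $G^0\to H^0$ and is a local homeomorphism. For $u\in G^0$, $\pi^{-1}(\pi(u))$ is a group under the multiplication of $G$, all of whose elements have range and domain $u$. *)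

theory Defs
  imports "HOL-Analysis.Analysis"
begin

text \<open>A topological groupoid: the arrows are the points of the topology; units are
  identified with arrows (the unit space is the image of the domain map).\<close>
record 'a groupoid =
  gtop :: "'a topology"
  dom :: "'a \<Rightarrow> 'a"
  rng :: "'a \<Rightarrow> 'a"
  mult :: "'a \<Rightarrow> 'a \<Rightarrow> 'a"
  ginv :: "'a \<Rightarrow> 'a"

definition arrows :: "('a, 'b) groupoid_scheme \<Rightarrow> 'a set" where
  "arrows G = topspace (gtop G)"

definition units :: "('a, 'b) groupoid_scheme \<Rightarrow> 'a set" where
  "units G = dom G ` arrows G"

definition composable :: "('a, 'b) groupoid_scheme \<Rightarrow> ('a \<times> 'a) set" where
  "composable G = {(g, h). g \<in> arrows G \<and> h \<in> arrows G \<and> dom G g = rng G h}"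

definition is_groupoid :: "('a, 'b) groupoid_scheme \<Rightarrow> bool" where
  "is_groupoid G \<longleftrightarrow>
    (\<forall>g\<in>arrows G. dom G g \<in> arrows G \<and> rng G g \<in> arrows G) \<and>
    (\<forall>g\<in>arrows G. dom G (dom G g) = dom G g \<and> rng G (dom G g) = dom G g \<and>
                    dom G (rng G g) = rng G g \<and> rng G (rng G g) = rng G g) \<and>
    (\<forall>(g, h)\<in>composable G. mult G g h \<in> arrows G \<and>
        dom G (mult G g h) = dom G h \<and> rng G (mult G g h) = rng G g) \<and>
    (\<forall>g\<in>arrows G. \<forall>h\<in>arrows G. \<forall>k\<in>arrows G. dom G g = rng G h \<longrightarrow> dom G h = rng G k \<longrightarrow>
        mult G (mult G g h) k = mult G g (mult G h k)) \<and>
    (\<forall>g\<in>arrows G. mult G (rng G g) g = g \<and> mult G g (dom G g) = g) \<and>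
    (\<forall>g\<in>arrows G. ginv G g \<in> arrows G \<and> dom G (ginv G g) = rng G g \<and>
        rng G (ginv G g) = dom G g \<and>
        mult G g (ginv G g) = rng G g \<and> mult G (ginv G g) g = dom G g)"

definition topological_groupoid :: "('a, 'b) groupoid_scheme \<Rightarrow> bool" where
  "topological_groupoid G \<longleftrightarrow> is_groupoid G \<and>
    continuous_map (subtopology (prod_topology (gtop G) (gtop G)) (composable G)) (gtop G)
       (\<lambda>(g, h). mult G g h) \<and>
    continuous_map (gtop G) (gtop G) (ginv G)"

definition rfiber :: "('a, 'b) groupoid_scheme \<Rightarrow> 'a \<Rightarrow> 'a set" where
  "rfiber G u = {g \<in> arrows G. rng G g = u}"

definition dfiber :: "('a, 'b) groupoid_scheme \<Rightarrow> 'a \<Rightarrow> 'a set" where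
  "dfiber G u = {g \<in> arrows G. dom G g = u}"

definition groupoid_hom ::
  "('a, 'b) groupoid_scheme \<Rightarrow> ('c, 'd) groupoid_scheme \<Rightarrow> ('a \<Rightarrow> 'c) \<Rightarrow> bool" where
  "groupoid_hom G H p \<longleftrightarrow>
    (\<forall>g\<in>arrows G. p g \<in> arrows H \<and> p (dom G g) = dom H (p g) \<and> p (rng G g) = rng H (p g)) \<and>
    (\<forall>(g, h)\<in>composable G. p (mult G g h) = mult H (p g) (p h))"

definition local_homeomorphism :: "'a topology \<Rightarrow> 'b topology \<Rightarrow> ('a \<Rightarrow> 'b) \<Rightarrow> bool" where
  "local_homeomorphism X Y p \<longleftrightarrow>
    (\<forall>x\<in>topspace X. \<exists>U. openin X U \<and> x \<in> U \<and> openin Y (p ` U) \<and>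
        homeomorphic_map (subtopology X U) (subtopology Y (p ` U)) p)"

definition fiberwise_groupoid_covering ::
  "('a, 'b) groupoid_scheme \<Rightarrow> ('c, 'd) groupoid_scheme \<Rightarrow> ('a \<Rightarrow> 'c) \<Rightarrow> bool" where
  "fiberwise_groupoid_covering G H p \<longleftrightarrow>
    groupoid_hom G H p \<and> p ` arrows G = arrows H \<and>
    homeomorphic_map (subtopology (gtop G) (units G)) (subtopology (gtop H) (units H)) p \<and>
    local_homeomorphism (gtop G) (gtop H) p"

definition covering_map :: "'a topology \<Rightarrow> 'b topology \<Rightarrow> ('a \<Rightarrow> 'b) \<Rightarrow> bool" where
  "covering_map X Y p \<longleftrightarrow> continuous_map X Y p \<and> p ` topspace X = topspace Y \<and>
    (\<forall>y\<in>topspace Y. \<exists>V. openin Y V \<and> y \<in> V \<and>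
       (\<exists>\<U>. \<Union>\<U> = {x \<in> topspace X. p x \<in> V} \<and> pairwise disjnt \<U> \<and>
          (\<forall>U\<in>\<U>. openin X U \<and> homeomorphic_map (subtopology X U) (subtopology Y V) p)))"

definition regular_covering_by ::
  "'a topology \<Rightarrow> 'b topology \<Rightarrow> ('a \<Rightarrow> 'b) \<Rightarrow> 'g set \<Rightarrow> ('g \<Rightarrow> 'a \<Rightarrow> 'a) \<Rightarrow> bool" where
  "regular_covering_by X Y p \<Gamma> act \<longleftrightarrow> covering_map X Y p \<and>
    (\<forall>\<gamma>\<in>\<Gamma>. homeomorphic_map X X (act \<gamma>) \<and> (\<forall>x\<in>topspace X. p (act \<gamma> x) = p x)) \<and>
    (\<forall>\<gamma>\<in>\<Gamma>. \<forall>\<delta>\<in>\<Gamma>. \<forall>x\<in>topspace X. act \<gamma> x = act \<delta> x \<longrightarrow> \<gamma> = \<delta>) \<and>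
    (\<forall>x\<in>topspace X. \<forall>y\<in>topspace X. p x = p y \<longleftrightarrow> (\<exists>\<gamma>\<in>\<Gamma>. y = act \<gamma> x))"

end

(* Since p is injective on units, an arrow \<gamma> with p \<gamma> = p u is a loop at u, and G^u is exactly
   the preimage of H^(p u); so p restricts to a surjective local homeomorphism G^u -> H^(p u).
   These loops act on G^u by left translation: homeomorphically, preserving p, freely (cancellation)
   and transitively on the fibres of p (if p x = p y then y x^-1 is such a loop). A surjective local
   homeomorphism carrying such an action is a covering: if p is injective on an open U, the
   translates of U are disjoint open sheets whose union is the preimage of p U. The statement for
   G_u is the one for G^u in the opposite groupoids. *)

theory Submission
  imports Defs
begin

lemma local_homeomorphism_imp_continuous_map:
  assumes "local_homeomorphism X Y p"
  shows "continuous_map X Y p"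
  unfolding continuous_map
proof (intro conjI allI impI)
  show "p ` topspace X \<subseteq> topspace Y"
    using assms openin_subset unfolding local_homeomorphism_def by fast
next
  fix W assume W: "openin Y W"
  show "openin X {x \<in> topspace X. p x \<in> W}"
  proof (subst openin_subopen, intro ballI)
    fix x assume x: "x \<in> {x \<in> topspace X. p x \<in> W}"
    then obtain U where U: "openin X U" "x \<in> U"
      and hU: "homeomorphic_map (subtopology X U) (subtopology Y (p ` U)) p"
      using assms unfolding local_homeomorphism_def by blast
    have "continuous_map (subtopology X U) Y p"
      using homeomorphic_imp_continuous_map[OF hU] continuous_map_into_fulltopology by blast
    then have "openin (subtopology X U) {y \<in> topspace (subtopology X U). p y \<in> W}"
      using W unfolding continuous_map by blast
    then have "openin X {y \<in> topspace (subtopology X U). p y \<in> W}"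
      using openin_trans_full U(1) by blast
    then show "\<exists>T. openin X T \<and> x \<in> T \<and> T \<subseteq> {x \<in> topspace X. p x \<in> W}"
      using x U(2) by auto
  qed
qed

lemma local_homeomorphism_subtopology_preimage:
  assumes p: "local_homeomorphism X Y p"
    and S: "\<And>x. x \<in> topspace X \<Longrightarrow> x \<in> S \<longleftrightarrow> p x \<in> T"
  shows "local_homeomorphism (subtopology X S) (subtopology Y T) p"
  unfolding local_homeomorphism_def
proof
  fix x assume x: "x \<in> topspace (subtopology X S)"
  then obtain U where U: "openin X U" "x \<in> U" "openin Y (p ` U)"
    and hU: "homeomorphic_map (subtopology X U) (subtopology Y (p ` U)) p"
    using p unfolding local_homeomorphism_def by auto
  have US: "p ` (S \<inter> U) = T \<inter> p ` U"
    using S openin_subset[OF U(1)] by auto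
  have "homeomorphic_map (subtopology (subtopology X U) S) (subtopology (subtopology Y (p ` U)) T) p"
    using S openin_subset[OF U(1)] by (intro homeomorphic_map_subtopologies_alt[OF hU]) auto
  then have "homeomorphic_map (subtopology (subtopology X S) (S \<inter> U)) (subtopology (subtopology Y T) (p ` (S \<inter> U))) p"
    by (simp add: subtopology_subtopology US Int_commute)
  moreover have "openin (subtopology X S) (S \<inter> U)" "openin (subtopology Y T) (p ` (S \<inter> U))"
    using U by (auto simp: US openin_subtopology_Int2)
  ultimately show "\<exists>U. openin (subtopology X S) U \<and> x \<in> U \<and> openin (subtopology Y T) (p ` U) \<and>
      homeomorphic_map (subtopology (subtopology X S) U) (subtopology (subtopology Y T) (p ` U)) p"
    using x U(2) by auto
qed

lemma homeomorphic_map_on_invariant_image: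
  assumes f: "homeomorphic_map X X f" and p: "homeomorphic_map (subtopology X U) Z p"
    and U: "U \<subseteq> topspace X" and invariant: "\<And>x. x \<in> U \<Longrightarrow> p (f x) = p x"
  shows "homeomorphic_map (subtopology X (f ` U)) Z p"
proof -
  have "f ` U \<subseteq> topspace X"
    using image_mono[OF U, of f] homeomorphic_imp_surjective_map[OF f] by simp
  then have "f ` (topspace X \<inter> U) = topspace X \<inter> f ` U"
    using U by (simp add: Int_absorb1 Int_absorb2)
  then obtain g where fg: "homeomorphic_maps (subtopology X U) (subtopology X (f ` U)) f g"
    using homeomorphic_map_subtopologies[OF f] unfolding homeomorphic_map_maps by blast
  then have g: "homeomorphic_map (subtopology X (f ` U)) (subtopology X U) g"
    by (simp add: homeomorphic_maps_map)
  show ?thesis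
  proof (rule homeomorphic_map_eq[OF homeomorphic_map_compose[OF g p]])
    fix z assume z: "z \<in> topspace (subtopology X (f ` U))"
    have "g z \<in> topspace (subtopology X U)"
      using continuous_map_image_subset_topspace[OF homeomorphic_imp_continuous_map[OF g]] z by blast
    moreover have "f (g z) = z"
      using fg z unfolding homeomorphic_maps_def by blast
    ultimately show "(p \<circ> g) z = p z"
      using invariant[of "g z"] by simp
  qed
qed

lemma Union_translates_eq_preimage:
  assumes U: "U \<subseteq> topspace X"
    and homeo: "\<And>\<gamma>. \<gamma> \<in> \<Gamma> \<Longrightarrow> homeomorphic_map X X (act \<gamma>)"
    and invariant: "\<And>\<gamma> x. \<gamma> \<in> \<Gamma> \<Longrightarrow> x \<in> topspace X \<Longrightarrow> p (act \<gamma> x) = p x"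
    and transitive: "\<And>x y. x \<in> topspace X \<Longrightarrow> y \<in> topspace X \<Longrightarrow> p x = p y \<Longrightarrow> \<exists>\<gamma>\<in>\<Gamma>. y = act \<gamma> x"
  shows "\<Union>((\<lambda>\<gamma>. act \<gamma> ` U) ` \<Gamma>) = {x \<in> topspace X. p x \<in> p ` U}"
proof (intro equalityI subsetI)
  fix z assume "z \<in> \<Union>((\<lambda>\<gamma>. act \<gamma> ` U) ` \<Gamma>)"
  then obtain \<gamma> a where "\<gamma> \<in> \<Gamma>" "a \<in> U" "z = act \<gamma> a"
    by blast
  moreover have "act \<gamma> a \<in> topspace X"
    using homeomorphic_imp_surjective_map[OF homeo[OF \<open>\<gamma> \<in> \<Gamma>\<close>]] U \<open>a \<in> U\<close> by blast
  ultimately show "z \<in> {x \<in> topspace X. p x \<in> p ` U}"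
    using invariant U by auto
next
  fix z assume "z \<in> {x \<in> topspace X. p x \<in> p ` U}"
  then obtain a where "a \<in> U" "z \<in> topspace X" "p a = p z"
    by auto
  then obtain \<gamma> where "\<gamma> \<in> \<Gamma>" "z = act \<gamma> a"
    using transitive U by blast
  then show "z \<in> \<Union>((\<lambda>\<gamma>. act \<gamma> ` U) ` \<Gamma>)"
    using \<open>a \<in> U\<close> by blast
qed

lemma pairwise_disjnt_translates:
  assumes U: "U \<subseteq> topspace X" and inj: "inj_on p U"
    and invariant: "\<And>\<gamma> x. \<gamma> \<in> \<Gamma> \<Longrightarrow> x \<in> topspace X \<Longrightarrow> p (act \<gamma> x) = p x"
    and free: "\<And>\<gamma> \<delta> x. \<gamma> \<in> \<Gamma> \<Longrightarrow> \<delta> \<in> \<Gamma> \<Longrightarrow> x \<in> topspace X \<Longrightarrow> act \<gamma> x = act \<delta> x \<Longrightarrow> \<gamma> = \<delta>"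
  shows "pairwise disjnt ((\<lambda>\<gamma>. act \<gamma> ` U) ` \<Gamma>)"
proof (rule pairwise_imageI)
  fix \<gamma> \<delta> assume \<gamma>: "\<gamma> \<in> \<Gamma>" and \<delta>: "\<delta> \<in> \<Gamma>" and "\<gamma> \<noteq> \<delta>"
  show "disjnt (act \<gamma> ` U) (act \<delta> ` U)"
  proof (rule ccontr)
    assume "\<not> disjnt (act \<gamma> ` U) (act \<delta> ` U)"
    then obtain a b where ab: "a \<in> U" "b \<in> U" "act \<gamma> a = act \<delta> b"
      unfolding disjnt_def by blast
    then have "a \<in> topspace X" "b \<in> topspace X"
      using U by auto
    then have "p a = p b"
      using invariant[OF \<gamma>, of a] invariant[OF \<delta>, of b] ab(3) by metis
    then have "a = b"
      using inj ab by (simp add: inj_on_eq_iff)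
    then show False
      using free[OF \<gamma> \<delta>] \<open>\<gamma> \<noteq> \<delta>\<close> \<open>a \<in> topspace X\<close> ab(3) by blast
  qed
qed

lemma covering_map_local_homeomorphism_free_action:
  assumes p: "local_homeomorphism X Y p" and surj: "p ` topspace X = topspace Y"
    and homeo: "\<And>\<gamma>. \<gamma> \<in> \<Gamma> \<Longrightarrow> homeomorphic_map X X (act \<gamma>)"
    and invariant: "\<And>\<gamma> x. \<gamma> \<in> \<Gamma> \<Longrightarrow> x \<in> topspace X \<Longrightarrow> p (act \<gamma> x) = p x"
    and free: "\<And>\<gamma> \<delta> x. \<gamma> \<in> \<Gamma> \<Longrightarrow> \<delta> \<in> \<Gamma> \<Longrightarrow> x \<in> topspace X \<Longrightarrow> act \<gamma> x = act \<delta> x \<Longrightarrow> \<gamma> = \<delta>"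
    and transitive: "\<And>x y. x \<in> topspace X \<Longrightarrow> y \<in> topspace X \<Longrightarrow> p x = p y \<Longrightarrow> \<exists>\<gamma>\<in>\<Gamma>. y = act \<gamma> x"
  shows "covering_map X Y p"
  unfolding covering_map_def
proof (intro conjI ballI)
  show "continuous_map X Y p"
    using local_homeomorphism_imp_continuous_map[OF p] .
  show "p ` topspace X = topspace Y"
    by (rule surj)
next
  fix y assume "y \<in> topspace Y"
  then have "y \<in> p ` topspace X"
    using surj by simp
  then obtain x where x: "x \<in> topspace X" "p x = y"
    by blast
  obtain U where U: "openin X U" "x \<in> U" "openin Y (p ` U)"
    and hU: "homeomorphic_map (subtopology X U) (subtopology Y (p ` U)) p"
    using p x(1) unfolding local_homeomorphism_def by blast
  have UX: "U \<subseteq> topspace X"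
    using openin_subset[OF U(1)] .
  have inj: "inj_on p U"
    using homeomorphic_imp_injective_map[OF hU] UX by (simp add: Int_absorb1)
  show "\<exists>V. openin Y V \<and> y \<in> V \<and>
     (\<exists>\<U>. \<Union>\<U> = {x \<in> topspace X. p x \<in> V} \<and> pairwise disjnt \<U> \<and>
        (\<forall>U'\<in>\<U>. openin X U' \<and> homeomorphic_map (subtopology X U') (subtopology Y V) p))"
  proof (intro exI conjI ballI)
    show "openin Y (p ` U)" "y \<in> p ` U"
      using U x(2) by auto
    show "\<Union>((\<lambda>\<gamma>. act \<gamma> ` U) ` \<Gamma>) = {x \<in> topspace X. p x \<in> p ` U}"
      using Union_translates_eq_preimage[of U X \<Gamma> act p, OF UX homeo invariant transitive] .
    show "pairwise disjnt ((\<lambda>\<gamma>. act \<gamma> ` U) ` \<Gamma>)"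
      using pairwise_disjnt_translates[of U X p \<Gamma> act, OF UX inj invariant free] .
  next
    fix U' assume "U' \<in> (\<lambda>\<gamma>. act \<gamma> ` U) ` \<Gamma>"
    then obtain \<gamma> where \<gamma>: "\<gamma> \<in> \<Gamma>" "U' = act \<gamma> ` U"
      by blast
    have "\<And>a. a \<in> U \<Longrightarrow> p (act \<gamma> a) = p a"
      using invariant[OF \<gamma>(1)] UX by blast
    then show "homeomorphic_map (subtopology X U') (subtopology Y (p ` U)) p"
      using homeomorphic_map_on_invariant_image[OF homeo[OF \<gamma>(1)] hU UX] \<gamma>(2) by simp
    show "openin X U'"
      using homeomorphic_map_openness[OF homeo[OF \<gamma>(1)] UX] U(1) \<gamma>(2) by simp
  qed
qed

lemma regular_covering_by_local_homeomorphism: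
  assumes p: "local_homeomorphism X Y p" and surj: "p ` topspace X = topspace Y"
    and homeo: "\<And>\<gamma>. \<gamma> \<in> \<Gamma> \<Longrightarrow> homeomorphic_map X X (act \<gamma>)"
    and invariant: "\<And>\<gamma> x. \<gamma> \<in> \<Gamma> \<Longrightarrow> x \<in> topspace X \<Longrightarrow> p (act \<gamma> x) = p x"
    and free: "\<And>\<gamma> \<delta> x. \<gamma> \<in> \<Gamma> \<Longrightarrow> \<delta> \<in> \<Gamma> \<Longrightarrow> x \<in> topspace X \<Longrightarrow> act \<gamma> x = act \<delta> x \<Longrightarrow> \<gamma> = \<delta>"
    and transitive: "\<And>x y. x \<in> topspace X \<Longrightarrow> y \<in> topspace X \<Longrightarrow> p x = p y \<Longrightarrow> \<exists>\<gamma>\<in>\<Gamma>. y = act \<gamma> x"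
  shows "regular_covering_by X Y p \<Gamma> act"
proof -
  have "covering_map X Y p"
    using covering_map_local_homeomorphism_free_action[of X Y p \<Gamma> act, OF assms] .
  moreover have "p x = p y \<longleftrightarrow> (\<exists>\<gamma>\<in>\<Gamma>. y = act \<gamma> x)" if "x \<in> topspace X" "y \<in> topspace X" for x y
    using transitive[OF that] invariant that(1) by auto
  ultimately show ?thesis
    unfolding regular_covering_by_def using homeo invariant free by blast
qed

context
  fixes G :: "('a, 'b) groupoid_scheme"
  assumes G: "is_groupoid G"
begin

lemma groupoid_dom_in_arrows: "g \<in> arrows G \<Longrightarrow> dom G g \<in> arrows G"
  and groupoid_rng_in_arrows: "g \<in> arrows G \<Longrightarrow> rng G g \<in> arrows G"
  using G unfolding is_groupoid_def by blast+

lemma groupoid_dom_dom: "g \<in> arrows G \<Longrightarrow> dom G (dom G g) = dom G g"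
  and groupoid_rng_dom: "g \<in> arrows G \<Longrightarrow> rng G (dom G g) = dom G g"
  and groupoid_dom_rng: "g \<in> arrows G \<Longrightarrow> dom G (rng G g) = rng G g"
  and groupoid_rng_rng: "g \<in> arrows G \<Longrightarrow> rng G (rng G g) = rng G g"
  using G unfolding is_groupoid_def by blast+

lemma groupoid_mult_in_arrows:
    "g \<in> arrows G \<Longrightarrow> h \<in> arrows G \<Longrightarrow> dom G g = rng G h \<Longrightarrow> mult G g h \<in> arrows G"
  and groupoid_dom_mult:
    "g \<in> arrows G \<Longrightarrow> h \<in> arrows G \<Longrightarrow> dom G g = rng G h \<Longrightarrow> dom G (mult G g h) = dom G h"
  and groupoid_rng_mult:
    "g \<in> arrows G \<Longrightarrow> h \<in> arrows G \<Longrightarrow> dom G g = rng G h \<Longrightarrow> rng G (mult G g h) = rng G g"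
  using G unfolding is_groupoid_def composable_def by blast+

lemma groupoid_mult_assoc:
  "g \<in> arrows G \<Longrightarrow> h \<in> arrows G \<Longrightarrow> k \<in> arrows G \<Longrightarrow> dom G g = rng G h \<Longrightarrow> dom G h = rng G k \<Longrightarrow>
    mult G (mult G g h) k = mult G g (mult G h k)"
  using G unfolding is_groupoid_def by blast

lemma groupoid_mult_rng_left: "g \<in> arrows G \<Longrightarrow> mult G (rng G g) g = g"
  and groupoid_mult_dom_right: "g \<in> arrows G \<Longrightarrow> mult G g (dom G g) = g"
  using G unfolding is_groupoid_def by blast+

lemma groupoid_ginv_in_arrows: "g \<in> arrows G \<Longrightarrow> ginv G g \<in> arrows G"
  and groupoid_dom_ginv: "g \<in> arrows G \<Longrightarrow> dom G (ginv G g) = rng G g"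
  and groupoid_rng_ginv: "g \<in> arrows G \<Longrightarrow> rng G (ginv G g) = dom G g"
  and groupoid_mult_ginv_right: "g \<in> arrows G \<Longrightarrow> mult G g (ginv G g) = rng G g"
  and groupoid_mult_ginv_left: "g \<in> arrows G \<Longrightarrow> mult G (ginv G g) g = dom G g"
  using G unfolding is_groupoid_def by blast+

lemma groupoid_units_iff: "x \<in> units G \<longleftrightarrow> x \<in> arrows G \<and> dom G x = x"
proof
  assume "x \<in> units G"
  then obtain g where "g \<in> arrows G" "x = dom G g"
    unfolding units_def by blast
  then show "x \<in> arrows G \<and> dom G x = x"
    by (simp add: groupoid_dom_in_arrows groupoid_dom_dom)
next
  assume "x \<in> arrows G \<and> dom G x = x"
  then show "x \<in> units G"
    unfolding units_def by (intro image_eqI[of x "dom G" x]) auto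
qed

lemma groupoid_rng_unit: "x \<in> units G \<Longrightarrow> rng G x = x"
  using groupoid_units_iff groupoid_rng_dom by metis

lemma groupoid_dom_in_units: "g \<in> arrows G \<Longrightarrow> dom G g \<in> units G"
  and groupoid_rng_in_units: "g \<in> arrows G \<Longrightarrow> rng G g \<in> units G"
  by (simp_all add: groupoid_units_iff groupoid_dom_in_arrows groupoid_rng_in_arrows
      groupoid_dom_dom groupoid_dom_rng)

lemma groupoid_mult_right_cancel:
  assumes "g \<in> arrows G" "h \<in> arrows G" "x \<in> arrows G" "dom G g = rng G x" "dom G h = rng G x"
    and "mult G g x = mult G h x"
  shows "g = h"
proof -
  have "mult G (mult G k x) (ginv G x) = k" if "k \<in> arrows G" "dom G k = rng G x" for k
  proof -
    have "mult G (mult G k x) (ginv G x) = mult G k (mult G x (ginv G x))"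
      using that assms(3) by (simp add: groupoid_mult_assoc groupoid_ginv_in_arrows groupoid_rng_ginv)
    also have "\<dots> = k"
      using that assms(3) by (simp add: groupoid_mult_ginv_right groupoid_mult_dom_right flip: that(2))
    finally show ?thesis .
  qed
  then show ?thesis
    using assms by metis
qed

lemma groupoid_mult_ginv_mult:
  assumes "g \<in> arrows G" "x \<in> arrows G" "rng G x = dom G g"
  shows "mult G (ginv G g) (mult G g x) = x"
proof -
  have "mult G (ginv G g) (mult G g x) = mult G (mult G (ginv G g) g) x"
    using assms by (simp add: groupoid_mult_assoc groupoid_ginv_in_arrows groupoid_dom_ginv)
  also have "\<dots> = x"
    using assms by (simp add: groupoid_mult_ginv_left groupoid_mult_rng_left flip: assms(3))
  finally show ?thesis .
qed

lemma groupoid_mult_mult_ginv: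
  assumes "g \<in> arrows G" "x \<in> arrows G" "rng G x = rng G g"
  shows "mult G g (mult G (ginv G g) x) = x"
proof -
  have "mult G g (mult G (ginv G g) x) = mult G (mult G g (ginv G g)) x"
    using assms by (simp add: groupoid_mult_assoc groupoid_ginv_in_arrows groupoid_dom_ginv groupoid_rng_ginv)
  also have "\<dots> = x"
    using assms by (simp add: groupoid_mult_ginv_right groupoid_mult_rng_left flip: assms(3))
  finally show ?thesis .
qed

end

lemma topspace_subtopology_rfiber: "topspace (subtopology (gtop G) (rfiber G u)) = rfiber G u"
  by (auto simp: rfiber_def arrows_def)

lemma continuous_map_groupoid_mult_left:
  assumes TG: "topological_groupoid G" and g: "g \<in> arrows G"
  shows "continuous_map (subtopology (gtop G) (rfiber G (dom G g))) (gtop G) (mult G g)"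
proof -
  have "continuous_map (subtopology (gtop G) (rfiber G (dom G g)))
      (subtopology (prod_topology (gtop G) (gtop G)) (composable G)) (\<lambda>x. (g, x))"
  proof (rule continuous_map_into_subtopology)
    show "continuous_map (subtopology (gtop G) (rfiber G (dom G g))) (prod_topology (gtop G) (gtop G)) (\<lambda>x. (g, x))"
      using g by (simp add: arrows_def continuous_map_from_subtopology continuous_map_pairedI)
    show "(\<lambda>x. (g, x)) \<in> topspace (subtopology (gtop G) (rfiber G (dom G g))) \<rightarrow> composable G"
      using g by (auto simp: topspace_subtopology_rfiber rfiber_def composable_def)
  qed
  moreover have "continuous_map (subtopology (prod_topology (gtop G) (gtop G)) (composable G)) (gtop G)
      (\<lambda>(g, h). mult G g h)"
    using TG by (simp add: topological_groupoid_def)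
  ultimately show ?thesis
    using continuous_map_compose by (fastforce simp: o_def)
qed

lemma homeomorphic_maps_groupoid_mult_left:
  assumes TG: "topological_groupoid G" and g: "g \<in> arrows G"
  shows "homeomorphic_maps (subtopology (gtop G) (rfiber G (dom G g))) (subtopology (gtop G) (rfiber G (rng G g)))
    (mult G g) (mult G (ginv G g))"
proof -
  have G: "is_groupoid G"
    using TG by (simp add: topological_groupoid_def)
  have ginv: "ginv G g \<in> arrows G" "dom G (ginv G g) = rng G g" "rng G (ginv G g) = dom G g"
    using g by (simp_all add: groupoid_ginv_in_arrows[OF G] groupoid_dom_ginv[OF G] groupoid_rng_ginv[OF G])
  have "mult G g ` rfiber G (dom G g) \<subseteq> rfiber G (rng G g)"
    using g by (auto simp: rfiber_def groupoid_mult_in_arrows[OF G] groupoid_rng_mult[OF G])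
  moreover have "mult G (ginv G g) ` rfiber G (rng G g) \<subseteq> rfiber G (dom G g)"
    using ginv by (auto simp: rfiber_def groupoid_mult_in_arrows[OF G] groupoid_rng_mult[OF G])
  ultimately show ?thesis
    unfolding homeomorphic_maps_def topspace_subtopology_rfiber
    using continuous_map_groupoid_mult_left[OF TG g] continuous_map_groupoid_mult_left[OF TG ginv(1)] g
    by (auto simp: continuous_map_in_subtopology ginv(2) topspace_subtopology_rfiber rfiber_def
        groupoid_mult_ginv_mult[OF G] groupoid_mult_mult_ginv[OF G])
qed

lemma groupoid_hom_arrows: "groupoid_hom G H p \<Longrightarrow> g \<in> arrows G \<Longrightarrow> p g \<in> arrows H"
  and groupoid_hom_dom: "groupoid_hom G H p \<Longrightarrow> g \<in> arrows G \<Longrightarrow> p (dom G g) = dom H (p g)"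
  and groupoid_hom_rng: "groupoid_hom G H p \<Longrightarrow> g \<in> arrows G \<Longrightarrow> p (rng G g) = rng H (p g)"
  unfolding groupoid_hom_def by blast+

lemma groupoid_hom_mult:
  "groupoid_hom G H p \<Longrightarrow> g \<in> arrows G \<Longrightarrow> h \<in> arrows G \<Longrightarrow> dom G g = rng G h \<Longrightarrow>
    p (mult G g h) = mult H (p g) (p h)"
  unfolding groupoid_hom_def composable_def by blast

context
  fixes G :: "('a, 'b) groupoid_scheme" and H :: "('c, 'd) groupoid_scheme" and p :: "'a \<Rightarrow> 'c"
  assumes G: "is_groupoid G" and H: "is_groupoid H" and hom: "groupoid_hom G H p"
    and inj_units: "inj_on p (units G)"
begin

lemma hom_rng_eq_iff: "x \<in> arrows G \<Longrightarrow> y \<in> arrows G \<Longrightarrow> rng H (p x) = rng H (p y) \<longleftrightarrow> rng G x = rng G y"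
  using inj_units groupoid_rng_in_units[OF G] groupoid_hom_rng[OF hom] by (metis inj_onD)

lemma hom_dom_eq_iff: "x \<in> arrows G \<Longrightarrow> y \<in> arrows G \<Longrightarrow> dom H (p x) = dom H (p y) \<longleftrightarrow> dom G x = dom G y"
  using inj_units groupoid_dom_in_units[OF G] groupoid_hom_dom[OF hom] by (metis inj_onD)

lemma hom_eq_unit_imp_dom: "u \<in> units G \<Longrightarrow> \<gamma> \<in> arrows G \<Longrightarrow> p \<gamma> = p u \<Longrightarrow> dom G \<gamma> = u"
  and hom_eq_unit_imp_rng: "u \<in> units G \<Longrightarrow> \<gamma> \<in> arrows G \<Longrightarrow> p \<gamma> = p u \<Longrightarrow> rng G \<gamma> = u"
proof -
  assume assms: "u \<in> units G" "\<gamma> \<in> arrows G" "p \<gamma> = p u"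
  have u: "u \<in> arrows G" "dom G u = u" "rng G u = u"
    using assms(1) groupoid_units_iff[OF G] groupoid_rng_unit[OF G] by auto
  show "dom G \<gamma> = u"
    using hom_dom_eq_iff[OF assms(2) u(1)] assms(3) u(2) by simp
  show "rng G \<gamma> = u"
    using hom_rng_eq_iff[OF assms(2) u(1)] assms(3) u(3) by simp
qed

lemma rfiber_iff_hom_rfiber:
  assumes "u \<in> units G" "g \<in> arrows G"
  shows "g \<in> rfiber G u \<longleftrightarrow> p g \<in> rfiber H (p u)"
proof -
  have u: "u \<in> arrows G" "rng G u = u"
    using assms(1) groupoid_units_iff[OF G] groupoid_rng_unit[OF G] by auto
  then have "p u = rng H (p u)"
    using groupoid_hom_rng[OF hom u(1)] by simp
  then show ?thesis
    using hom_rng_eq_iff[OF assms(2) u(1)] u(2) groupoid_hom_arrows[OF hom assms(2)] assms(2)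
    by (auto simp: rfiber_def)
qed

lemma image_rfiber_eq:
  assumes surj: "p ` arrows G = arrows H" and u: "u \<in> units G"
  shows "p ` rfiber G u = rfiber H (p u)"
proof (intro equalityI subsetI)
  show "h \<in> rfiber H (p u)" if "h \<in> p ` rfiber G u" for h
    using that rfiber_iff_hom_rfiber[OF u] by (auto simp: rfiber_def)
  show "h \<in> p ` rfiber G u" if h: "h \<in> rfiber H (p u)" for h
  proof -
    obtain g where "g \<in> arrows G" "h = p g"
      using h surj by (auto simp: rfiber_def)
    then show ?thesis
      using h rfiber_iff_hom_rfiber[OF u] by blast
  qed
qed

lemma hom_mult_left_invariant:
  assumes "u \<in> units G" "\<gamma> \<in> arrows G" "p \<gamma> = p u" "g \<in> rfiber G u"
  shows "p (mult G \<gamma> g) = p g"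
proof -
  have g: "g \<in> arrows G" "rng G g = u"
    using assms(4) by (auto simp: rfiber_def)
  have "p (mult G \<gamma> g) = mult H (p u) (p g)"
    using groupoid_hom_mult[OF hom assms(2) g(1)] hom_eq_unit_imp_dom[OF assms(1-3)] g(2) assms(3) by simp
  also have "\<dots> = mult H (rng H (p g)) (p g)"
    using groupoid_hom_rng[OF hom g(1)] g(2) by simp
  also have "\<dots> = p g"
    using groupoid_mult_rng_left[OF H groupoid_hom_arrows[OF hom g(1)]] .
  finally show ?thesis .
qed

lemma hom_eq_imp_mult_left:
  assumes "x \<in> rfiber G u" "y \<in> rfiber G u" "p x = p y"
  shows "\<exists>\<gamma>\<in>{\<gamma> \<in> arrows G. p \<gamma> = p u}. y = mult G \<gamma> x"
proof
  have x: "x \<in> arrows G" "rng G x = u" and y: "y \<in> arrows G" "rng G y = u"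
    using assms(1,2) by (auto simp: rfiber_def)
  have "dom G y = dom G x"
    using hom_dom_eq_iff[OF y(1) x(1)] assms(3) by simp
  then have yx: "dom G y = rng G (ginv G x)"
    using groupoid_rng_ginv[OF G x(1)] by simp
  have "p (mult G y (ginv G x)) = mult H (p x) (p (ginv G x))"
    using groupoid_hom_mult[OF hom y(1) groupoid_ginv_in_arrows[OF G x(1)] yx] assms(3) by simp
  also have "\<dots> = p (mult G x (ginv G x))"
    using groupoid_hom_mult[OF hom x(1) groupoid_ginv_in_arrows[OF G x(1)]] groupoid_rng_ginv[OF G x(1)]
    by simp
  also have "\<dots> = p u"
    using groupoid_mult_ginv_right[OF G x(1)] x(2) by simp
  finally show "mult G y (ginv G x) \<in> {\<gamma> \<in> arrows G. p \<gamma> = p u}"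
    using groupoid_mult_in_arrows[OF G y(1) groupoid_ginv_in_arrows[OF G x(1)] yx] by simp
  have "mult G (mult G y (ginv G x)) x = mult G y (mult G (ginv G x) x)"
    using groupoid_mult_assoc[OF G y(1) groupoid_ginv_in_arrows[OF G x(1)] x(1) yx]
      groupoid_dom_ginv[OF G x(1)] by simp
  also have "\<dots> = y"
    using groupoid_mult_ginv_left[OF G x(1)] groupoid_mult_dom_right[OF G y(1)] \<open>dom G y = dom G x\<close>
    by simp
  finally show "y = mult G (mult G y (ginv G x)) x" ..
qed

end

lemma fiberwise_groupoid_covering_inj_units:
  assumes "is_groupoid G" "fiberwise_groupoid_covering G H p"
  shows "inj_on p (units G)"
proof -
  have "units G \<subseteq> topspace (gtop G)"
    using groupoid_units_iff[OF assms(1)] by (auto simp: arrows_def)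
  then show ?thesis
    using assms(2) homeomorphic_imp_injective_map
    by (fastforce simp: fiberwise_groupoid_covering_def Int_absorb1)
qed

lemma regular_covering_rfiber_mult_left:
  assumes TG: "topological_groupoid G" and H: "is_groupoid H"
    and cov: "fiberwise_groupoid_covering G H p" and u: "u \<in> units G"
  shows "regular_covering_by (subtopology (gtop G) (rfiber G u)) (subtopology (gtop H) (rfiber H (p u)))
           p {\<gamma> \<in> arrows G. p \<gamma> = p u} (\<lambda>\<gamma> g. mult G \<gamma> g)"
proof -
  have G: "is_groupoid G"
    using TG by (simp add: topological_groupoid_def)
  have hom: "groupoid_hom G H p" and surj: "p ` arrows G = arrows H"
    and lh: "local_homeomorphism (gtop G) (gtop H) p"
    using cov by (simp_all add: fiberwise_groupoid_covering_def)
  note inj = fiberwise_groupoid_covering_inj_units[OF G cov]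
  show ?thesis
  proof (rule regular_covering_by_local_homeomorphism, unfold topspace_subtopology_rfiber)
    show "local_homeomorphism (subtopology (gtop G) (rfiber G u)) (subtopology (gtop H) (rfiber H (p u))) p"
      using rfiber_iff_hom_rfiber[OF G H hom inj u]
      by (intro local_homeomorphism_subtopology_preimage[OF lh]) (simp add: arrows_def)
    show "p ` rfiber G u = rfiber H (p u)"
      using image_rfiber_eq[OF G H hom inj surj u] .
  next
    fix \<gamma> assume "\<gamma> \<in> {\<gamma> \<in> arrows G. p \<gamma> = p u}"
    then have \<gamma>: "\<gamma> \<in> arrows G" "p \<gamma> = p u" "dom G \<gamma> = u" "rng G \<gamma> = u"
      using hom_eq_unit_imp_dom[OF G H hom inj u] hom_eq_unit_imp_rng[OF G H hom inj u] by auto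
    show "homeomorphic_map (subtopology (gtop G) (rfiber G u)) (subtopology (gtop G) (rfiber G u)) (mult G \<gamma>)"
      using homeomorphic_maps_groupoid_mult_left[OF TG \<gamma>(1)] \<gamma>(3,4) homeomorphic_maps_imp_map by metis
    show "p (mult G \<gamma> g) = p g" if "g \<in> rfiber G u" for g
      using hom_mult_left_invariant[OF G H hom inj u \<gamma>(1,2) that] .
  next
    fix \<gamma> \<delta> g
    assume "\<gamma> \<in> {\<gamma> \<in> arrows G. p \<gamma> = p u}" "\<delta> \<in> {\<gamma> \<in> arrows G. p \<gamma> = p u}" "g \<in> rfiber G u"
      and "mult G \<gamma> g = mult G \<delta> g"
    then show "\<gamma> = \<delta>"
      using hom_eq_unit_imp_dom[OF G H hom inj u] groupoid_mult_right_cancel[OF G]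
      by (auto simp: rfiber_def)
  next
    fix x y assume "x \<in> rfiber G u" "y \<in> rfiber G u" "p x = p y"
    then show "\<exists>\<gamma>\<in>{\<gamma> \<in> arrows G. p \<gamma> = p u}. y = mult G \<gamma> x"
      by (rule hom_eq_imp_mult_left[OF G H hom inj])
  qed
qed

definition op_groupoid :: "('a, 'b) groupoid_scheme \<Rightarrow> ('a, 'b) groupoid_scheme" where
  "op_groupoid G = G\<lparr>dom := rng G, rng := dom G, mult := (\<lambda>g h. mult G h g)\<rparr>"

lemma op_groupoid_simps [simp]:
  "gtop (op_groupoid G) = gtop G" "dom (op_groupoid G) = rng G" "rng (op_groupoid G) = dom G"
  "mult (op_groupoid G) = (\<lambda>g h. mult G h g)" "ginv (op_groupoid G) = ginv G"
  "arrows (op_groupoid G) = arrows G"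
  by (simp_all add: op_groupoid_def arrows_def)

lemma composable_op_groupoid: "(g, h) \<in> composable (op_groupoid G) \<longleftrightarrow> (h, g) \<in> composable G"
  by (auto simp: composable_def)

lemma rfiber_op_groupoid: "rfiber (op_groupoid G) u = dfiber G u"
  by (simp add: rfiber_def dfiber_def)

lemma is_groupoid_op_groupoid:
  assumes G: "is_groupoid G"
  shows "is_groupoid (op_groupoid G)"
  unfolding is_groupoid_def composable_def
  by (auto simp: G groupoid_dom_in_arrows groupoid_rng_in_arrows groupoid_dom_dom groupoid_rng_dom
      groupoid_dom_rng groupoid_rng_rng groupoid_mult_in_arrows groupoid_dom_mult groupoid_rng_mult
      groupoid_mult_assoc groupoid_mult_rng_left groupoid_mult_dom_right groupoid_ginv_in_arrows
      groupoid_dom_ginv groupoid_rng_ginv groupoid_mult_ginv_right groupoid_mult_ginv_left)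

lemma units_op_groupoid:
  assumes G: "is_groupoid G"
  shows "units (op_groupoid G) = units G"
proof -
  have "rng G x = x \<longleftrightarrow> dom G x = x" if "x \<in> arrows G" for x
    using that groupoid_dom_rng[OF G] groupoid_rng_dom[OF G] by metis
  then show ?thesis
    using groupoid_units_iff[OF G] groupoid_units_iff[OF is_groupoid_op_groupoid[OF G]] by auto
qed

lemma topological_groupoid_op_groupoid:
  assumes TG: "topological_groupoid G"
  shows "topological_groupoid (op_groupoid G)"
proof -
  have "continuous_map (subtopology (prod_topology (gtop G) (gtop G)) (composable (op_groupoid G)))
      (subtopology (prod_topology (gtop G) (gtop G)) (composable G)) (\<lambda>(g, h). (h, g))"
  proof (rule continuous_map_into_subtopology)
    show "continuous_map (subtopology (prod_topology (gtop G) (gtop G)) (composable (op_groupoid G)))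
        (prod_topology (gtop G) (gtop G)) (\<lambda>(g, h). (h, g))"
      by (simp add: case_prod_unfold continuous_map_from_subtopology continuous_map_pairedI
          continuous_map_fst continuous_map_snd)
    show "(\<lambda>(g, h). (h, g)) \<in> topspace (subtopology (prod_topology (gtop G) (gtop G)) (composable (op_groupoid G)))
        \<rightarrow> composable G"
      by (auto simp: composable_op_groupoid)
  qed
  moreover have "continuous_map (subtopology (prod_topology (gtop G) (gtop G)) (composable G)) (gtop G)
      (\<lambda>(g, h). mult G g h)"
    using TG by (simp add: topological_groupoid_def)
  ultimately have "continuous_map (subtopology (prod_topology (gtop G) (gtop G)) (composable (op_groupoid G)))
      (gtop G) (\<lambda>(g, h). mult G h g)"
    using continuous_map_compose by (fastforce simp: o_def case_prod_unfold)
  moreover have "is_groupoid G" "continuous_map (gtop G) (gtop G) (ginv G)"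
    using TG by (simp_all add: topological_groupoid_def)
  ultimately show ?thesis
    unfolding topological_groupoid_def using is_groupoid_op_groupoid by simp
qed

lemma fiberwise_groupoid_covering_op_groupoid:
  assumes "is_groupoid G" "is_groupoid H" "fiberwise_groupoid_covering G H p"
  shows "fiberwise_groupoid_covering (op_groupoid G) (op_groupoid H) p"
proof -
  have "groupoid_hom (op_groupoid G) (op_groupoid H) p"
    using assms(3) unfolding fiberwise_groupoid_covering_def groupoid_hom_def composable_def by auto
  then show ?thesis
    using assms by (simp add: fiberwise_groupoid_covering_def units_op_groupoid)
qed

theorem lemma9p3:
  fixes G :: "('a, 'b) groupoid_scheme" and H :: "('c, 'd) groupoid_scheme" and p :: "'a \<Rightarrow> 'c"
  assumes "topological_groupoid G" and "topological_groupoid H"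
    and "fiberwise_groupoid_covering G H p"
    and "u \<in> units G"
  shows "regular_covering_by (subtopology (gtop G) (rfiber G u)) (subtopology (gtop H) (rfiber H (p u)))
           p {\<gamma> \<in> arrows G. p \<gamma> = p u} (\<lambda>\<gamma> g. mult G \<gamma> g)
       \<and> regular_covering_by (subtopology (gtop G) (dfiber G u)) (subtopology (gtop H) (dfiber H (p u)))
           p {\<gamma> \<in> arrows G. p \<gamma> = p u} (\<lambda>\<gamma> g. mult G g \<gamma>)"
proof
  have G: "is_groupoid G" and H: "is_groupoid H"
    using assms(1,2) by (simp_all add: topological_groupoid_def)
  show "regular_covering_by (subtopology (gtop G) (rfiber G u)) (subtopology (gtop H) (rfiber H (p u)))
      p {\<gamma> \<in> arrows G. p \<gamma> = p u} (\<lambda>\<gamma> g. mult G \<gamma> g)"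
    using regular_covering_rfiber_mult_left[OF assms(1) H assms(3,4)] .
  have "regular_covering_by
      (subtopology (gtop (op_groupoid G)) (rfiber (op_groupoid G) u))
      (subtopology (gtop (op_groupoid H)) (rfiber (op_groupoid H) (p u)))
      p {\<gamma> \<in> arrows (op_groupoid G). p \<gamma> = p u} (\<lambda>\<gamma> g. mult (op_groupoid G) \<gamma> g)"
    using regular_covering_rfiber_mult_left[OF topological_groupoid_op_groupoid[OF assms(1)]
        is_groupoid_op_groupoid[OF H] fiberwise_groupoid_covering_op_groupoid[OF G H assms(3)]]
      assms(4) units_op_groupoid[OF G] by simp
  then show "regular_covering_by (subtopology (gtop G) (dfiber G u)) (subtopology (gtop H) (dfiber H (p u)))
      p {\<gamma> \<in> arrows G. p \<gamma> = p u} (\<lambda>\<gamma> g. mult G g \<gamma>)"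
    by (simp add: rfiber_op_groupoid)
qed

end
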